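(* Let $n\ge1$, let $d\ge1$ be a square-free integer and let $L(\mathbf{X})=\sum_{i,j=1}^n a_{ij}x_{ij}\in\mathbb{Z}[\mathbf{X}]$ be a linear form in the $n^2$ variables $\mathbf{X}=(x_{ij})_{i,j=1}^n$. Let $D=\gcd(L,d)$ be the greatest common divisor of $d$ and all coefficients $a_{ij}$. Define \[ S_d(L)=\sum_{\substack{\mathbf{X}\in\mathbb{Z}_{d}^{n\times n}\\ \det\mathbf{X}\equiv0 \bmod d}}\exp\left(2\pi i\,L(\mathbf{X})/d\right). \] Then \[ |S_d(L)|\le d^{n^2+o(1)}\begin{cases}(D/d)^n & \text{if $L$ is a monomial},\\ (D/d)^{(n+1)/2} & \text{otherwise},\end{cases} \] where $o(1)$ denotes a quantity tending to $0$ as $d\to\infty$, uniformly in $L$ (depending only on $n$).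
   Context: $\mathbb{Z}_{d}$ denotes the residue ring modulo $d$, represented by $\{0,\dots,d-1\}$. "$L$ is a monomial" means exactly one coefficient $a_{ij}$ is nonzero. *)

theory Defs
  imports "HOL-Analysis.Analysis" "HOL-Computational_Algebra.Squarefree"
begin

text \<open>Matrices X in Z_d^{n x n} are represented by integer matrices with entries in {0..<d};
  the index type 'n has CARD('n) = n elements.\<close>

definition residue_matrices :: "nat \<Rightarrow> (int^'n^'n) set" where
  "residue_matrices d = {X. \<forall>i j. X$i$j \<in> {0..<int d}}"

definition linform :: "int^'n^'n \<Rightarrow> int^'n^'n \<Rightarrow> int" where
  "linform a X = (\<Sum>i\<in>UNIV. \<Sum>j\<in>UNIV. a$i$j * X$i$j)"

definition S_sum :: "nat \<Rightarrow> int^'n^'n \<Rightarrow> complex" where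
  "S_sum d a = (\<Sum>X\<in>{X\<in>residue_matrices d. int d dvd det X}.
      exp (2 * of_real pi * \<i> * of_int (linform a X) / of_nat d))"

definition gcd_form :: "int^'n^'n \<Rightarrow> nat \<Rightarrow> int" where
  "gcd_form a d = Gcd (insert (int d) {a$i$j | i j. True})"

definition is_monomial :: "int^'n^'n \<Rightarrow> bool" where
  "is_monomial a \<longleftrightarrow> card {(i,j). a$i$j \<noteq> 0} = 1"

end

theory Submission
  imports Defs
begin

text \<open>
  Let \<open>p\<close> be prime and \<open>a\<^sub>l\<^sub>k \<not>\<equiv> 0 (mod p)\<close>. Detect \<open>det X \<equiv> 0\<close> by averaging
  \<open>e\<^sub>p(t det X)\<close> over \<open>t\<close>, and expand \<open>det X = c(Y) \<cdot> x\<^sub>l\<close> along row \<open>l\<close>, where the cofactor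
  vector \<open>c(Y)\<close> depends only on the other rows \<open>Y\<close>. Summing over \<open>x\<^sub>l\<close> leaves \<open>p^n\<close> times
  the indicator of \<open>t c(Y) + a\<^sub>l \<equiv> 0\<close>. This congruence determines \<open>t\<close>, and since \<open>c(Y)\<close> is
  orthogonal to the rows of \<open>Y\<close> it forces them into the hyperplane \<open>a\<^sub>l \<cdot> y \<equiv> 0\<close>; hence
  \<open>|S\<^sub>p| \<le> p^(n-1) p^((n-1)^2) = p^(n^2-n)\<close>. If \<open>p\<close> divides every coefficient, the trivial
  bound \<open>p^(n^2) = p^(n^2-n) D^n\<close> suffices. By the CRT, \<open>S\<^sub>d\<close> is multiplicative in \<open>d\<close> up to
  scaling the form by units, and \<open>D\<close> is multiplicative too, so \<open>|S\<^sub>d| \<le> d^(n^2) (D/d)^n\<close> for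
  squarefree \<open>d\<close>. As \<open>D/d \<le> 1\<close>, this gives both cases with \<open>o(1) = 0\<close>.
\<close>

section \<open>Additive characters\<close>

definition add_char :: "nat \<Rightarrow> int \<Rightarrow> complex" where
  "add_char m k = exp (2 * of_real pi * \<i> * of_int k / of_nat m)"

lemma add_char_0 [simp]: "add_char m 0 = 1"
  by (simp add: add_char_def)

lemma add_char_add: "add_char m (x + y) = add_char m x * add_char m y"
  unfolding add_char_def by (simp add: exp_add[symmetric] add_divide_distrib distrib_left)

lemma add_char_sum: "finite I \<Longrightarrow> add_char m (sum f I) = (\<Prod>i\<in>I. add_char m (f i))"
  by (induction I rule: finite_induct) (simp_all add: add_char_add)

lemma norm_add_char [simp]: "norm (add_char m k) = 1"
  unfolding add_char_def by (simp add: norm_exp_eq_Re)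

lemma add_char_power: "add_char m (b * int i) = add_char m b ^ i"
  by (induction i) (simp_all add: algebra_simps add_char_add)

lemma add_char_eq_1_iff:
  assumes "m > 0"
  shows "add_char m b = 1 \<longleftrightarrow> int m dvd b"
proof
  assume "int m dvd b"
  then obtain j where "b = int m * j" by blast
  then have "2 * of_real pi * \<i> * of_int b / of_nat m = (2 * of_int j * pi) * \<i>"
    using assms by (simp add: field_simps)
  then show "add_char m b = 1"
    unfolding add_char_def using exp_integer_2pi[of "of_int j"] by simp
next
  assume "add_char m b = 1"
  then obtain j :: int where "Im (2 * of_real pi * \<i> * of_int b / of_nat m) = of_int (2 * j) * pi"
    unfolding add_char_def exp_eq_1 by blast
  then have "2 * pi * b / m = 2 * j * pi"
    by (simp add: Im_divide_of_nat)
  then have "real_of_int b = real_of_int (int m * j)"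
    using assms by (simp add: field_simps)
  then have "b = int m * j" by (simp only: of_int_eq_iff)
  then show "int m dvd b" by simp
qed

lemma add_char_cong:
  assumes "m > 0" "x mod int m = y mod int m"
  shows "add_char m x = add_char m y"
proof -
  have "int m dvd y - x"
    using assms(2) by (simp add: mod_eq_dvd_iff dvd_diff_commute)
  then obtain k where "y - x = int m * k" by (elim dvdE)
  then have "y = x + int m * k" by simp
  then show ?thesis
    using add_char_eq_1_iff[OF assms(1), of "int m * k"] by (simp add: add_char_add)
qed

text \<open>From \<open>1/(m\<^sub>1 m\<^sub>2) = v/m\<^sub>1 + u/m\<^sub>2\<close>.\<close>

lemma add_char_mult_modulus:
  assumes "m\<^sub>1 > 0" "m\<^sub>2 > 0" "u * int m\<^sub>1 + v * int m\<^sub>2 = 1"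
  shows "add_char (m\<^sub>1 * m\<^sub>2) k = add_char m\<^sub>1 (v * k) * add_char m\<^sub>2 (u * k)"
proof -
  have uv: "of_int v * of_nat m\<^sub>2 + of_int u * of_nat m\<^sub>1 = (1::complex)"
    using arg_cong[OF assms(3), of "of_int :: int \<Rightarrow> complex"] by (simp add: algebra_simps)
  have "2 * of_real pi * \<i> * of_int (v * k) / of_nat m\<^sub>1 + 2 * of_real pi * \<i> * of_int (u * k) / of_nat m\<^sub>2
      = 2 * of_real pi * \<i> * of_int k * (of_int v * of_nat m\<^sub>2 + of_int u * of_nat m\<^sub>1) / (of_nat m\<^sub>1 * of_nat m\<^sub>2)"
    using assms(1,2) by (simp add: field_simps)
  also have "\<dots> = 2 * of_real pi * \<i> * of_int k / of_nat (m\<^sub>1 * m\<^sub>2)"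
    by (simp add: uv)
  finally show ?thesis
    unfolding add_char_def by (simp add: exp_add[symmetric])
qed

lemma sum_add_char:
  assumes "m > 0"
  shows "(\<Sum>y\<in>{0..<int m}. add_char m (b * y)) = (if int m dvd b then of_nat m else 0)"
proof -
  have "{0..<int m} = int ` {..<m}"
    using image_int_atLeastLessThan[of 0 m] by (simp add: lessThan_atLeast0)
  then have "(\<Sum>y\<in>{0..<int m}. add_char m (b * y)) = (\<Sum>i<m. add_char m b ^ i)"
    by (simp add: sum.reindex add_char_power)
  also have "\<dots> = (if int m dvd b then of_nat m else 0)"
  proof (cases "int m dvd b")
    case True
    then have "add_char m b = 1"
      using add_char_eq_1_iff[OF assms] by simp
    then show ?thesis
      using True by simp
  next
    case False
    have "add_char m b ^ m = 1"
      using add_char_power[of m b m] add_char_eq_1_iff[OF assms, of "b * int m"] by simp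
    then show ?thesis
      using False add_char_eq_1_iff[OF assms] by (simp add: sum_gp_strict)
  qed
  finally show ?thesis .
qed

lemma bij_betw_vec_lambda_PiE:
  "bij_betw vec_lambda (PiE UNIV A) {x::'a^'n. \<forall>i. x$i \<in> A i}"
  by (rule bij_betwI[where g = vec_nth]) auto

lemma finite_vec_set: "(\<And>i. finite (A i)) \<Longrightarrow> finite {x::'a^'n. \<forall>i. x$i \<in> A i}"
  using bij_betw_finite[OF bij_betw_vec_lambda_PiE, of A] by (simp add: finite_PiE)

lemma card_vec_set: "card {x::'a^'n. \<forall>i. x$i \<in> A i} = (\<Prod>i\<in>UNIV. card (A i))"
  using bij_betw_same_card[OF bij_betw_vec_lambda_PiE, of A] by (simp add: card_PiE)

lemma sum_vec_set_prod:
  fixes f :: "'n::finite \<Rightarrow> 'a \<Rightarrow> 'c::comm_semiring_1"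
  assumes "\<And>i. finite (A i)"
  shows "(\<Sum>x\<in>{x::'a^'n. \<forall>i. x$i \<in> A i}. \<Prod>i\<in>UNIV. f i (x$i)) = (\<Prod>i\<in>UNIV. \<Sum>y\<in>A i. f i y)"
proof -
  have "(\<Sum>x\<in>{x::'a^'n. \<forall>i. x$i \<in> A i}. \<Prod>i\<in>UNIV. f i (x$i))
      = (\<Sum>g\<in>PiE UNIV A. \<Prod>i\<in>UNIV. f i (g i))"
    using sum.reindex_bij_betw[OF bij_betw_vec_lambda_PiE, of "\<lambda>x. \<Prod>i\<in>UNIV. f i (x$i)" A]
    by simp
  also have "\<dots> = (\<Prod>i\<in>UNIV. \<Sum>y\<in>A i. f i y)"
    using prod_sum_PiE[of UNIV A f] assms by simp
  finally show ?thesis .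
qed

definition residue_vectors :: "nat \<Rightarrow> (int^'n) set" where
  "residue_vectors m = {v. \<forall>i. v$i \<in> {0..<int m}}"

definition dot :: "'a::comm_ring_1^'n \<Rightarrow> 'a^'n \<Rightarrow> 'a" where
  "dot b v = (\<Sum>i\<in>UNIV. b$i * v$i)"

lemma dot_zero_right [simp]: "dot b 0 = 0"
  unfolding dot_def by simp

lemma dot_scale_add_left: "dot (t *s c + b) v = t * dot c v + dot b v"
  unfolding dot_def by (simp add: sum_distrib_left sum.distrib algebra_simps)

lemma finite_residue_vectors [simp]: "finite (residue_vectors m)"
  unfolding residue_vectors_def by (rule finite_vec_set) simp

lemma card_residue_vectors: "card (residue_vectors m :: (int^'n) set) = m ^ CARD('n)"
  unfolding residue_vectors_def card_vec_set by simp

lemma sum_add_char_dot: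
  fixes b :: "int^'n"
  assumes "m > 0"
  shows "(\<Sum>v\<in>residue_vectors m. add_char m (dot b v))
       = (if \<forall>i. int m dvd b$i then of_nat m ^ CARD('n) else 0)"
proof -
  have "(\<Sum>v\<in>residue_vectors m. add_char m (dot b v))
      = (\<Prod>i\<in>UNIV. \<Sum>y\<in>{0..<int m}. add_char m (b$i * y))"
    unfolding dot_def residue_vectors_def add_char_sum[OF finite]
    by (rule sum_vec_set_prod) simp
  also have "\<dots> = (\<Prod>i\<in>UNIV. if int m dvd b$i then of_nat m else 0)"
    by (simp add: sum_add_char[OF assms])
  also have "\<dots> = (if \<forall>i. int m dvd b$i then of_nat m ^ CARD('n) else 0)"
    by (auto simp: prod_zero_iff)
  finally show ?thesis .
qed

lemma eq_if_prime_dvd_diff_mult: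
  assumes "prime p" "\<not> int p dvd c" "int p dvd t\<^sub>1 * c - t\<^sub>2 * c"
    and "t\<^sub>1 \<in> {0..<int p}" "t\<^sub>2 \<in> {0..<int p}"
  shows "t\<^sub>1 = t\<^sub>2"
proof -
  have "int p dvd (t\<^sub>1 - t\<^sub>2) * c"
    using assms(3) by (simp add: left_diff_distrib)
  then have "int p dvd t\<^sub>1 - t\<^sub>2"
    using assms(1,2) prime_dvd_mult_iff[of "int p"] by simp
  then have "t\<^sub>1 mod int p = t\<^sub>2 mod int p"
    by (simp add: mod_eq_dvd_iff)
  then show ?thesis
    using assms(4,5) by simp
qed

lemma card_hyperplane_mod_prime:
  fixes b :: "int^'n"
  assumes "prime p" "\<not> int p dvd b$k"
  shows "card {v\<in>residue_vectors p. int p dvd dot b v} = p ^ (CARD('n) - 1)"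
proof -
  have p0: "p > 0"
    using assms(1) prime_gt_0_nat by blast
  have only_zero: "(\<forall>i. int p dvd t * b$i) \<longleftrightarrow> t = 0" if "t \<in> {0..<int p}" for t
  proof
    assume "\<forall>i. int p dvd t * b$i"
    then have "int p dvd t * b$k - 0 * b$k" by simp
    then show "t = 0"
      using eq_if_prime_dvd_diff_mult[OF assms _ that, of 0] p0 by simp
  qed simp
  have "of_nat (p * card {v\<in>residue_vectors p. int p dvd dot b v})
      = (\<Sum>v\<in>residue_vectors p. if int p dvd dot b v then (of_nat p :: complex) else 0)"
    by (simp add: sum.inter_filter[symmetric])
  also have "\<dots> = (\<Sum>v\<in>residue_vectors p. \<Sum>t\<in>{0..<int p}. add_char p (dot b v * t))"
    by (simp add: sum_add_char[OF p0])
  also have "\<dots> = (\<Sum>t\<in>{0..<int p}. \<Sum>v\<in>residue_vectors p. add_char p (dot (t *s b) v))"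
    by (subst sum.swap) (simp add: dot_def sum_distrib_left algebra_simps)
  also have "\<dots> = (\<Sum>t\<in>{0..<int p}. if t = 0 then of_nat p ^ CARD('n) else 0)"
    by (intro sum.cong refl) (simp add: sum_add_char_dot[OF p0] only_zero)
  also have "\<dots> = of_nat (p ^ (CARD('n) - 1) * p)"
    using power_minus_mult[OF zero_less_card_finite[where 'a='n], of "of_nat p :: complex"] by (simp add: sum.delta)
  finally show ?thesis
    using p0 by (simp only: of_nat_eq_iff) simp
qed

section \<open>Expansion of the determinant along a row\<close>

definition replace_row :: "'a^'n^'m \<Rightarrow> 'm \<Rightarrow> 'a^'n \<Rightarrow> 'a^'n^'m" where
  "replace_row Y l v = (\<chi> i. if i = l then v else Y$i)"

definition cofactor_vector :: "'a::comm_ring_1^'n^'n \<Rightarrow> 'n \<Rightarrow> 'a^'n" where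
  "cofactor_vector Y l = (\<chi> k. det (replace_row Y l (axis k 1)))"

lemma det_replace_row:
  fixes Y :: "'a::comm_ring_1^'n^'n"
  shows "det (replace_row Y l v) = dot (cofactor_vector Y l) v"
proof -
  have "det (replace_row Y l v)
      = det ((\<chi> i. if i = l then (\<Sum>k\<in>UNIV. v$k *s axis k 1) else Y$i) :: 'a^'n^'n)"
    unfolding replace_row_def basis_expansion ..
  also have "\<dots> = (\<Sum>k\<in>UNIV. v$k * det (replace_row Y l (axis k 1)))"
    unfolding det_linear_row_sum[OF finite] replace_row_def by (simp add: det_row_mul)
  finally show ?thesis
    unfolding dot_def cofactor_vector_def by (simp add: mult.commute)
qed

lemma dot_cofactor_vector_row:
  fixes Y :: "'a::comm_ring_1^'n^'n"
  assumes "j \<noteq> l"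
  shows "dot (cofactor_vector Y l) (Y$j) = 0"
proof -
  have "det (replace_row Y l (Y$j)) = 0"
    by (rule det_identical_rows[of j l]) (use assms in \<open>auto simp: row_def replace_row_def vec_eq_iff\<close>)
  then show ?thesis
    by (simp add: det_replace_row)
qed

definition matrices_with_zero_row :: "'m \<Rightarrow> ('a::zero^'n) set \<Rightarrow> ('a^'n^'m) set" where
  "matrices_with_zero_row l A = {Y. \<forall>i. Y$i \<in> (if i = l then {0} else A)}"

lemma mem_matrices_with_zero_row:
  "Y \<in> matrices_with_zero_row l A \<longleftrightarrow> Y$l = 0 \<and> (\<forall>i. i \<noteq> l \<longrightarrow> Y$i \<in> A)"
  unfolding matrices_with_zero_row_def by (auto simp: if_split_mem2)

lemma finite_matrices_with_zero_row: "finite A \<Longrightarrow> finite (matrices_with_zero_row l A)"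
  unfolding matrices_with_zero_row_def by (rule finite_vec_set) simp

lemma card_matrices_with_zero_row:
  "card (matrices_with_zero_row l A :: ('a::zero^'n^'m) set) = card A ^ (CARD('m) - 1)"
proof -
  have "card (matrices_with_zero_row l A :: ('a^'n^'m) set) = (\<Prod>i\<in>UNIV. if i = l then 1 else card A)"
    unfolding matrices_with_zero_row_def card_vec_set by (intro prod.cong) auto
  also have "\<dots> = card A ^ (CARD('m) - 1)"
    by (simp add: prod.If_cases card_Diff_singleton Compl_eq_Diff_UNIV)
  finally show ?thesis .
qed

lemma residue_matrices_eq_vec_set: "residue_matrices m = {X::int^'n^'n. \<forall>i. X$i \<in> residue_vectors m}"
  unfolding residue_matrices_def residue_vectors_def by auto

lemma finite_residue_matrices [simp]: "finite (residue_matrices m :: (int^'n^'n) set)"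
  unfolding residue_matrices_eq_vec_set by (rule finite_vec_set) simp

lemma card_residue_matrices:
  "card (residue_matrices m :: (int^'n^'n) set) = m ^ (CARD('n) * CARD('n))"
  unfolding residue_matrices_eq_vec_set card_vec_set by (simp add: card_residue_vectors power_mult)

lemma sum_residue_matrices_split_row:
  "(\<Sum>X\<in>residue_matrices m. F X)
     = (\<Sum>Y\<in>matrices_with_zero_row l (residue_vectors m). \<Sum>v\<in>residue_vectors m. F (replace_row Y l v))"
proof -
  have "bij_betw (\<lambda>(Y, v). replace_row Y l v)
      (matrices_with_zero_row l (residue_vectors m) \<times> residue_vectors m) (residue_matrices m)"
    by (rule bij_betwI[where g = "\<lambda>X. (replace_row X l 0, X$l)"])
       (auto simp: matrices_with_zero_row_def residue_matrices_eq_vec_set replace_row_def vec_eq_iff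
             split: if_splits)
  then show ?thesis
    by (simp add: sum.reindex_bij_betw[symmetric] sum.cartesian_product case_prod_unfold)
qed

section \<open>The sum modulo a prime\<close>

definition singular_residue_matrices :: "nat \<Rightarrow> (int^'n^'n) set" where
  "singular_residue_matrices m = {X\<in>residue_matrices m. int m dvd det X}"

lemma S_sum_eq_sum_singular:
  "S_sum m a = (\<Sum>X\<in>singular_residue_matrices m. add_char m (linform a X))"
  unfolding S_sum_def singular_residue_matrices_def add_char_def ..

lemma norm_S_sum_le: "cmod (S_sum d a) \<le> real d ^ (CARD('n) * CARD('n))"
  for a :: "int^'n^'n"
proof -
  have "cmod (S_sum d a) \<le> real (card (singular_residue_matrices d :: (int^'n^'n) set))"
    unfolding S_sum_eq_sum_singular using norm_sum[of "\<lambda>X. add_char d (linform a X)"] by simp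
  also have "\<dots> \<le> real (card (residue_matrices d :: (int^'n^'n) set))"
    unfolding singular_residue_matrices_def by (intro of_nat_mono card_mono) auto
  finally show ?thesis
    by (simp add: card_residue_matrices)
qed

lemma linform_eq_sum_dot: "linform a X = (\<Sum>i\<in>UNIV. dot (a$i) (X$i))"
  unfolding linform_def dot_def ..

lemma linform_replace_zero_row:
  assumes "Y$l = 0"
  shows "linform a (replace_row Y l v) = linform a Y + dot (a$l) v"
proof -
  have "dot (a$i) (replace_row Y l v $ i) = dot (a$i) (Y$i) + (if i = l then dot (a$l) v else 0)" for i
    using assms by (simp add: replace_row_def)
  then show ?thesis
    unfolding linform_eq_sum_dot by (simp add: sum.distrib)
qed

lemma S_sum_eq_sum_twisted:
  fixes a :: "int^'n^'n"
  assumes "m > 0"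
  shows "S_sum m a = (1 / of_nat m) *
    (\<Sum>X\<in>residue_matrices m. \<Sum>t\<in>{0..<int m}. add_char m (t * det X + linform a X))"
proof -
  have "(if int m dvd det X then add_char m (linform a X) else 0)
      = (1 / of_nat m) * (\<Sum>t\<in>{0..<int m}. add_char m (t * det X + linform a X))" for X
  proof -
    have "(\<Sum>t\<in>{0..<int m}. add_char m (t * det X + linform a X))
        = add_char m (linform a X) * (\<Sum>t\<in>{0..<int m}. add_char m (det X * t))"
      by (simp add: add_char_add sum_distrib_left mult.commute)
    then show ?thesis
      using assms by (simp add: sum_add_char)
  qed
  then show ?thesis
    unfolding S_sum_eq_sum_singular singular_residue_matrices_def
    by (simp add: sum.inter_filter sum_distrib_left)
qed

lemma sum_replace_zero_row_twisted:
  fixes a Y :: "int^'n^'n"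
  assumes "m > 0" "Y$l = 0"
  shows "(\<Sum>v\<in>residue_vectors m. add_char m (t * det (replace_row Y l v) + linform a (replace_row Y l v)))
    = of_nat m ^ CARD('n) *
      (if \<forall>i. int m dvd t * cofactor_vector Y l $ i + a$l$i then add_char m (linform a Y) else 0)"
proof -
  have "t * det (replace_row Y l v) + linform a (replace_row Y l v)
      = linform a Y + dot (t *s cofactor_vector Y l + a$l) v" for v
    using assms(2) by (simp add: det_replace_row linform_replace_zero_row dot_scale_add_left)
  then show ?thesis
    using sum_add_char_dot[OF assms(1), of "t *s cofactor_vector Y l + a$l"]
    by (simp add: add_char_add sum_distrib_left[symmetric])
qed

definition cofactor_solutions :: "nat \<Rightarrow> int^'n^'n \<Rightarrow> 'n \<Rightarrow> ((int^'n^'n) \<times> int) set" where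
  "cofactor_solutions m a l =
     {(Y, t). Y \<in> matrices_with_zero_row l (residue_vectors m) \<and> t \<in> {0..<int m} \<and>
              (\<forall>i. int m dvd t * cofactor_vector Y l $ i + a$l$i)}"

lemma S_sum_eq_sum_cofactor_solutions:
  fixes a :: "int^'n^'n"
  assumes "m > 0"
  shows "S_sum m a = of_nat m ^ (CARD('n) - 1) * (\<Sum>(Y, t)\<in>cofactor_solutions m a l. add_char m (linform a Y))"
proof -
  let ?Z = "matrices_with_zero_row l (residue_vectors m) :: (int^'n^'n) set"
  let ?T = "{0..<int m}"
  let ?P = "\<lambda>Y t. \<forall>i. int m dvd t * cofactor_vector Y l $ i + a$l$i"
  have "S_sum m a = (1 / of_nat m) * (\<Sum>Y\<in>?Z. \<Sum>t\<in>?T. \<Sum>v\<in>residue_vectors m.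
      add_char m (t * det (replace_row Y l v) + linform a (replace_row Y l v)))"
    unfolding S_sum_eq_sum_twisted[OF assms] sum_residue_matrices_split_row[of _ _ l]
    by (simp add: sum.swap[of _ "residue_vectors m"])
  also have "\<dots> = (1 / of_nat m) * (of_nat m ^ CARD('n) *
      (\<Sum>Y\<in>?Z. \<Sum>t\<in>?T. if ?P Y t then add_char m (linform a Y) else 0))"
    using assms by (simp add: sum_replace_zero_row_twisted mem_matrices_with_zero_row sum_distrib_left)
  also have "(\<Sum>Y\<in>?Z. \<Sum>t\<in>?T. if ?P Y t then add_char m (linform a Y) else 0)
      = (\<Sum>(Y, t)\<in>cofactor_solutions m a l. add_char m (linform a Y))"
  proof -
    have "cofactor_solutions m a l = {z \<in> ?Z \<times> ?T. ?P (fst z) (snd z)}"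
      by (auto simp: cofactor_solutions_def)
    then show ?thesis
      unfolding sum.cartesian_product
      by (simp add: sum.inter_filter finite_matrices_with_zero_row case_prod_unfold)
  qed
  also have "(of_nat m :: complex) ^ CARD('n) = of_nat m * of_nat m ^ (CARD('n) - 1)"
    by (simp add: power_eq_if)
  finally show ?thesis
    using assms by simp
qed

lemma norm_S_sum_le_card_cofactor_solutions:
  fixes a :: "int^'n^'n"
  assumes "m > 0"
  shows "cmod (S_sum m a) \<le> real m ^ (CARD('n) - 1) * real (card (cofactor_solutions m a l))"
proof -
  have "cmod (\<Sum>(Y, t)\<in>cofactor_solutions m a l. add_char m (linform a Y))
      \<le> (\<Sum>(Y, t)\<in>cofactor_solutions m a l. 1)"
    using norm_sum[of "\<lambda>(Y, t). add_char m (linform a Y)"] by (simp add: case_prod_unfold)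
  then show ?thesis
    unfolding S_sum_eq_sum_cofactor_solutions[OF assms, of a l]
    by (simp add: norm_mult norm_power mult_left_mono)
qed

text \<open>Modulo a prime with \<open>a\<^sub>l \<not>\<equiv> 0\<close>, \<open>t\<close> is determined by \<open>Y\<close>, and since the cofactor
  vector is orthogonal to the other rows of \<open>Y\<close>, these rows lie in the hyperplane
  \<open>a\<^sub>l \<cdot> y \<equiv> 0\<close>.\<close>

lemma inj_on_fst_cofactor_solutions:
  assumes p: "prime p" and a: "\<not> int p dvd a$l$k"
  shows "inj_on fst (cofactor_solutions p a l)"
proof (rule inj_onI)
  fix z z'
  assume "z \<in> cofactor_solutions p a l" "z' \<in> cofactor_solutions p a l" "fst z = fst z'"
  then obtain Y t t' where z: "z = (Y, t)" "z' = (Y, t')"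
    and sol: "(Y, t) \<in> cofactor_solutions p a l" "(Y, t') \<in> cofactor_solutions p a l"
    by (metis prod.collapse)
  let ?c = "cofactor_vector Y l $ k"
  have dvd: "int p dvd t * ?c + a$l$k" "int p dvd t' * ?c + a$l$k"
    using sol unfolding cofactor_solutions_def by auto
  then have "\<not> int p dvd ?c"
    using a by (metis dvd_add_right_iff dvd_mult)
  moreover have "int p dvd t * ?c - t' * ?c"
    using dvd_diff[OF dvd] by simp
  ultimately have "t = t'"
    using eq_if_prime_dvd_diff_mult[OF p] sol unfolding cofactor_solutions_def by blast
  then show "z = z'"
    using z by simp
qed

lemma fst_cofactor_solutions_subset:
  "fst ` cofactor_solutions m a l
     \<subseteq> matrices_with_zero_row l {v\<in>residue_vectors m. int m dvd dot (a$l) v}"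
proof
  fix Y
  assume "Y \<in> fst ` cofactor_solutions m a l"
  then obtain t where "(Y, t) \<in> cofactor_solutions m a l"
    by force
  then have Y: "Y \<in> matrices_with_zero_row l (residue_vectors m)"
    and t: "\<forall>i. int m dvd (t *s cofactor_vector Y l + a$l) $ i"
    unfolding cofactor_solutions_def by auto
  have "int m dvd dot (a$l) (Y$i)" if "i \<noteq> l" for i
  proof -
    have "dot (a$l) (Y$i) = dot (t *s cofactor_vector Y l + a$l) (Y$i)"
      using dot_cofactor_vector_row[where Y=Y, OF that] by (simp add: dot_scale_add_left)
    also have "int m dvd \<dots>"
      unfolding dot_def using t by (intro dvd_sum) simp
    finally show ?thesis .
  qed
  then show "Y \<in> matrices_with_zero_row l {v\<in>residue_vectors m. int m dvd dot (a$l) v}"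
    using Y by (simp add: mem_matrices_with_zero_row)
qed

lemma card_cofactor_solutions_prime:
  fixes a :: "int^'n^'n"
  assumes p: "prime p" and a: "\<not> int p dvd a$l$k"
  shows "card (cofactor_solutions p a l) \<le> p ^ ((CARD('n) - 1) * (CARD('n) - 1))"
proof -
  let ?H = "{v\<in>residue_vectors p. int p dvd dot (a$l) v}"
  have "card (cofactor_solutions p a l) = card (fst ` cofactor_solutions p a l)"
    using inj_on_fst_cofactor_solutions[OF p a] by (simp add: card_image)
  also have "\<dots> \<le> card (matrices_with_zero_row l ?H)"
    by (intro card_mono finite_matrices_with_zero_row fst_cofactor_solutions_subset) simp
  also have "\<dots> = p ^ ((CARD('n) - 1) * (CARD('n) - 1))"
    by (simp add: card_matrices_with_zero_row card_hyperplane_mod_prime[OF p a] power_mult)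
  finally show ?thesis .
qed

lemma norm_S_sum_prime_nondegenerate:
  fixes a :: "int^'n^'n"
  assumes "prime p" "\<not> int p dvd a$l$k"
  shows "cmod (S_sum p a) \<le> real p ^ (CARD('n) * CARD('n) - CARD('n))"
proof -
  let ?n = "CARD('n)"
  have "cmod (S_sum p a) \<le> real p ^ (?n - 1) * real (card (cofactor_solutions p a l))"
    using assms(1) by (intro norm_S_sum_le_card_cofactor_solutions) (simp add: prime_gt_0_nat)
  also have "\<dots> \<le> real p ^ (?n - 1) * real p ^ ((?n - 1) * (?n - 1))"
    using card_cofactor_solutions_prime[OF assms]
    by (intro mult_left_mono) (simp_all flip: of_nat_power)
  also have "\<dots> = real p ^ (?n * ?n - ?n)"
  proof -
    have "(?n - 1) + (?n - 1) * (?n - 1) = ?n * ?n - ?n"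
      using zero_less_card_finite[where 'a='n] by (cases ?n) (simp_all add: algebra_simps)
    then show ?thesis
      by (simp flip: power_add)
  qed
  finally show ?thesis .
qed

lemma gcd_form_dvd_modulus: "gcd_form a d dvd int d"
  unfolding gcd_form_def by (rule Gcd_dvd) simp

lemma gcd_form_dvd_coeff: "gcd_form a d dvd a$i$j"
  unfolding gcd_form_def by (rule Gcd_dvd) auto

lemma gcd_form_greatest: "x dvd int d \<Longrightarrow> (\<And>i j. x dvd a$i$j) \<Longrightarrow> x dvd gcd_form a d"
  unfolding gcd_form_def by (rule Gcd_greatest) auto

lemma gcd_form_pos:
  assumes "d > 0"
  shows "gcd_form a d > 0"
proof -
  have "gcd_form a d \<noteq> 0"
    using gcd_form_dvd_modulus[of a d] assms by auto
  moreover have "gcd_form a d \<ge> 0"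
    unfolding gcd_form_def by simp
  ultimately show ?thesis
    by simp
qed

lemma norm_S_sum_prime:
  fixes a :: "int^'n^'n"
  assumes p: "prime p"
  shows "cmod (S_sum p a) \<le> real p ^ (CARD('n) * CARD('n) - CARD('n)) * real_of_int (gcd_form a p) ^ CARD('n)"
proof (cases "\<exists>l k. \<not> int p dvd a$l$k")
  case True
  then obtain l k where "\<not> int p dvd a$l$k"
    by blast
  then have "cmod (S_sum p a) \<le> real p ^ (CARD('n) * CARD('n) - CARD('n))"
    by (rule norm_S_sum_prime_nondegenerate[OF p])
  moreover have "1 \<le> real_of_int (gcd_form a p) ^ CARD('n)"
    using gcd_form_pos[of p a] p by (simp add: prime_gt_0_nat)
  ultimately show ?thesis
    by (simp add: order_trans[OF _ mult_left_mono[of 1]])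
next
  case False
  then have "int p dvd gcd_form a p"
    by (intro gcd_form_greatest) auto
  then have "int p \<le> gcd_form a p"
    using gcd_form_pos[of p a] p by (intro zdvd_imp_le) (simp_all add: prime_gt_0_nat)
  then have "real p \<le> real_of_int (gcd_form a p)"
    by linarith
  then have "real p ^ CARD('n) \<le> real_of_int (gcd_form a p) ^ CARD('n)"
    by (simp add: power_mono)
  then have "real p ^ (CARD('n) * CARD('n) - CARD('n)) * real p ^ CARD('n)
      \<le> real p ^ (CARD('n) * CARD('n) - CARD('n)) * real_of_int (gcd_form a p) ^ CARD('n)"
    by (simp add: mult_left_mono)
  moreover have "real p ^ (CARD('n) * CARD('n) - CARD('n)) * real p ^ CARD('n) = real p ^ (CARD('n) * CARD('n))"
    by (simp flip: power_add)
  ultimately show ?thesis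
    using norm_S_sum_le[of p a] by linarith
qed

section \<open>The sum modulo a squarefree number\<close>

definition matrix_mod :: "nat \<Rightarrow> int^'n^'m \<Rightarrow> int^'n^'m" where
  "matrix_mod m X = (\<chi> i j. X$i$j mod int m)"

lemma mod_sum_cong:
  assumes "\<And>x. x \<in> A \<Longrightarrow> f x mod (m::int) = g x mod m"
  shows "sum f A mod m = sum g A mod m"
  by (metis (no_types, lifting) assms mod_sum_eq sum.cong)

lemma det_matrix_mod:
  fixes X :: "int^'n^'n"
  shows "det (matrix_mod m X) mod int m = det X mod int m"
proof -
  have prod_mod: "(\<Prod>i\<in>UNIV. matrix_mod m X $ i $ p i) mod int m = (\<Prod>i\<in>UNIV. X $ i $ p i) mod int m" for p
  proof -
    have "(\<Prod>i\<in>UNIV. matrix_mod m X $ i $ p i) mod int m = (\<Prod>i\<in>UNIV. X $ i $ p i mod int m) mod int m"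
      unfolding matrix_mod_def by simp
    then show ?thesis
      by (simp add: mod_prod_eq)
  qed
  then show ?thesis
    unfolding det_def by (intro mod_sum_cong mod_mult_cong refl prod_mod)
qed

lemma linform_matrix_mod: "linform a (matrix_mod m X) mod int m = linform a X mod int m"
  unfolding linform_def matrix_mod_def
  by (intro mod_sum_cong) (simp add: mod_mult_right_eq)

lemma matrix_mod_in_residue_matrices: "m > 0 \<Longrightarrow> matrix_mod m X \<in> residue_matrices m"
  unfolding matrix_mod_def residue_matrices_def by simp

lemma dvd_det_matrix_mod_iff: "int m dvd det (matrix_mod m X) \<longleftrightarrow> int m dvd det X"
  for X :: "int^'n^'n"
  using det_matrix_mod[of m X] by (simp add: dvd_eq_mod_eq_0)

lemma mod_crt_combination:
  assumes "u * int m\<^sub>1 + v * int m\<^sub>2 = 1" "x \<in> {0..<int m\<^sub>1}" "y \<in> {0..<int m\<^sub>2}"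
  defines "z \<equiv> (x * v * int m\<^sub>2 + y * u * int m\<^sub>1) mod int (m\<^sub>1 * m\<^sub>2)"
  shows "z mod int m\<^sub>1 = x" "z mod int m\<^sub>2 = y"
proof -
  have "x * v * int m\<^sub>2 = x - x * u * int m\<^sub>1" "y * u * int m\<^sub>1 = y - y * v * int m\<^sub>2"
    using arg_cong[OF assms(1), of "(*) x"] arg_cong[OF assms(1), of "(*) y"]
    by (simp_all add: algebra_simps)
  then have z\<^sub>1: "x * v * int m\<^sub>2 + y * u * int m\<^sub>1 = x + (y * u - x * u) * int m\<^sub>1"
    and z\<^sub>2: "x * v * int m\<^sub>2 + y * u * int m\<^sub>1 = y + (x * v - y * v) * int m\<^sub>2"
    by (simp_all add: algebra_simps)
  show "z mod int m\<^sub>1 = x"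
    using assms(2) unfolding z_def z\<^sub>1 by (simp add: mod_mod_cancel)
  show "z mod int m\<^sub>2 = y"
    using assms(3) unfolding z_def z\<^sub>2 by (simp add: mod_mod_cancel)
qed

lemma matrix_mod_crt_combination:
  assumes "u * int m\<^sub>1 + v * int m\<^sub>2 = 1" "m\<^sub>1 > 0" "m\<^sub>2 > 0"
    and "X\<^sub>1 \<in> residue_matrices m\<^sub>1" "X\<^sub>2 \<in> residue_matrices m\<^sub>2"
  defines "X \<equiv> (\<chi> i j. (X\<^sub>1$i$j * v * int m\<^sub>2 + X\<^sub>2$i$j * u * int m\<^sub>1) mod int (m\<^sub>1 * m\<^sub>2))"
  shows "X \<in> residue_matrices (m\<^sub>1 * m\<^sub>2)" "matrix_mod m\<^sub>1 X = X\<^sub>1" "matrix_mod m\<^sub>2 X = X\<^sub>2"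
  using assms(2-5) mod_crt_combination[OF assms(1)]
  unfolding X_def matrix_mod_def residue_matrices_def by (simp_all add: vec_eq_iff)

lemma eq_if_matrix_mod_eq_coprime:
  assumes "coprime m\<^sub>1 m\<^sub>2" "X \<in> residue_matrices (m\<^sub>1 * m\<^sub>2)" "Y \<in> residue_matrices (m\<^sub>1 * m\<^sub>2)"
    and "matrix_mod m\<^sub>1 X = matrix_mod m\<^sub>1 Y" "matrix_mod m\<^sub>2 X = matrix_mod m\<^sub>2 Y"
  shows "X = Y"
proof -
  have dvd: "int m\<^sub>1 dvd X$i$j - Y$i$j" "int m\<^sub>2 dvd X$i$j - Y$i$j" for i j
    using assms(4,5) unfolding matrix_mod_def by (auto simp: vec_eq_iff mod_eq_dvd_iff)
  have "coprime (int m\<^sub>1) (int m\<^sub>2)"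
    using assms(1) by simp
  then have "X$i$j mod int (m\<^sub>1 * m\<^sub>2) = Y$i$j mod int (m\<^sub>1 * m\<^sub>2)" for i j
    using divides_mult[OF dvd[of i j]] by (simp add: mod_eq_dvd_iff)
  then show "X = Y"
    using assms(2,3) unfolding residue_matrices_def by (simp add: vec_eq_iff)
qed

lemma bij_betw_matrix_mod_coprime:
  assumes "coprime m\<^sub>1 m\<^sub>2" "m\<^sub>1 > 0" "m\<^sub>2 > 0" "u * int m\<^sub>1 + v * int m\<^sub>2 = 1"
  shows "bij_betw (\<lambda>X. (matrix_mod m\<^sub>1 X, matrix_mod m\<^sub>2 X))
           (singular_residue_matrices (m\<^sub>1 * m\<^sub>2) :: (int^'n^'n) set)
           (singular_residue_matrices m\<^sub>1 \<times> singular_residue_matrices m\<^sub>2)"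
proof (rule bij_betwI')
  fix X Y :: "int^'n^'n"
  assume "X \<in> singular_residue_matrices (m\<^sub>1 * m\<^sub>2)" "Y \<in> singular_residue_matrices (m\<^sub>1 * m\<^sub>2)"
  then show "(matrix_mod m\<^sub>1 X, matrix_mod m\<^sub>2 X) = (matrix_mod m\<^sub>1 Y, matrix_mod m\<^sub>2 Y) \<longleftrightarrow> X = Y"
    using eq_if_matrix_mod_eq_coprime[OF assms(1)] unfolding singular_residue_matrices_def by auto
next
  fix X :: "int^'n^'n"
  assume "X \<in> singular_residue_matrices (m\<^sub>1 * m\<^sub>2)"
  then show "(matrix_mod m\<^sub>1 X, matrix_mod m\<^sub>2 X) \<in> singular_residue_matrices m\<^sub>1 \<times> singular_residue_matrices m\<^sub>2"
    using assms(2,3) matrix_mod_in_residue_matrices unfolding singular_residue_matrices_def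
    by (auto simp: dvd_det_matrix_mod_iff intro: dvd_mult_left dvd_mult_right)
next
  fix Z :: "(int^'n^'n) \<times> (int^'n^'n)"
  assume "Z \<in> singular_residue_matrices m\<^sub>1 \<times> singular_residue_matrices m\<^sub>2"
  then obtain X\<^sub>1 X\<^sub>2 where Z: "Z = (X\<^sub>1, X\<^sub>2)"
    and X\<^sub>1: "X\<^sub>1 \<in> residue_matrices m\<^sub>1" "int m\<^sub>1 dvd det X\<^sub>1"
    and X\<^sub>2: "X\<^sub>2 \<in> residue_matrices m\<^sub>2" "int m\<^sub>2 dvd det X\<^sub>2"
    unfolding singular_residue_matrices_def by blast
  note X = matrix_mod_crt_combination[OF assms(4,2,3) X\<^sub>1(1) X\<^sub>2(1)]
  let ?X = "\<chi> i j. (X\<^sub>1$i$j * v * int m\<^sub>2 + X\<^sub>2$i$j * u * int m\<^sub>1) mod int (m\<^sub>1 * m\<^sub>2)"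
  have "int m\<^sub>1 dvd det ?X" "int m\<^sub>2 dvd det ?X"
    using X X\<^sub>1(2) X\<^sub>2(2) dvd_det_matrix_mod_iff[of m\<^sub>1 ?X] dvd_det_matrix_mod_iff[of m\<^sub>2 ?X] by simp_all
  then have "?X \<in> singular_residue_matrices (m\<^sub>1 * m\<^sub>2)"
    using X(1) divides_mult[of "int m\<^sub>1" "det ?X" "int m\<^sub>2"] assms(1)
    unfolding singular_residue_matrices_def by simp
  then show "\<exists>X\<in>singular_residue_matrices (m\<^sub>1 * m\<^sub>2). Z = (matrix_mod m\<^sub>1 X, matrix_mod m\<^sub>2 X)"
    by (rule bexI[rotated]) (simp only: Z X(2,3))
qed

definition scale_form :: "int \<Rightarrow> int^'n^'n \<Rightarrow> int^'n^'n" where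
  "scale_form c a = (\<chi> i j. c * a$i$j)"

lemma linform_scale_form: "linform (scale_form c a) X = c * linform a X"
  unfolding linform_def scale_form_def by (simp add: sum_distrib_left algebra_simps)

lemma S_sum_mult_coprime:
  fixes a :: "int^'n^'n"
  assumes "coprime m\<^sub>1 m\<^sub>2" "m\<^sub>1 > 0" "m\<^sub>2 > 0" "u * int m\<^sub>1 + v * int m\<^sub>2 = 1"
  shows "S_sum (m\<^sub>1 * m\<^sub>2) a = S_sum m\<^sub>1 (scale_form v a) * S_sum m\<^sub>2 (scale_form u a)"
proof -
  let ?f = "\<lambda>(X\<^sub>1, X\<^sub>2). add_char m\<^sub>1 (linform (scale_form v a) X\<^sub>1) * add_char m\<^sub>2 (linform (scale_form u a) X\<^sub>2)"
  have "S_sum m\<^sub>1 (scale_form v a) * S_sum m\<^sub>2 (scale_form u a)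
      = (\<Sum>Z\<in>singular_residue_matrices m\<^sub>1 \<times> singular_residue_matrices m\<^sub>2. ?f Z)"
    unfolding S_sum_eq_sum_singular sum_product sum.cartesian_product ..
  also have "\<dots> = (\<Sum>X\<in>singular_residue_matrices (m\<^sub>1 * m\<^sub>2). ?f (matrix_mod m\<^sub>1 X, matrix_mod m\<^sub>2 X))"
    by (rule sum.reindex_bij_betw[OF bij_betw_matrix_mod_coprime[OF assms], symmetric])
  also have "\<dots> = (\<Sum>X\<in>singular_residue_matrices (m\<^sub>1 * m\<^sub>2). add_char (m\<^sub>1 * m\<^sub>2) (linform a X))"
    unfolding linform_scale_form add_char_mult_modulus[OF assms(2-4)] case_prod_conv
    using assms(2,3) by (intro sum.cong refl arg_cong2[where f = "(*)"] add_char_cong mod_mult_cong linform_matrix_mod)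
  finally show ?thesis
    by (simp add: S_sum_eq_sum_singular)
qed

lemma gcd_form_scale_form_mult_dvd:
  assumes "coprime m\<^sub>1 m\<^sub>2" "u * int m\<^sub>1 + v * int m\<^sub>2 = 1"
  shows "gcd_form (scale_form v a) m\<^sub>1 * gcd_form (scale_form u a) m\<^sub>2 dvd gcd_form a (m\<^sub>1 * m\<^sub>2)"
proof -
  let ?g\<^sub>1 = "gcd_form (scale_form v a) m\<^sub>1" and ?g\<^sub>2 = "gcd_form (scale_form u a) m\<^sub>2"
  have g\<^sub>1: "?g\<^sub>1 dvd int m\<^sub>1" and g\<^sub>2: "?g\<^sub>2 dvd int m\<^sub>2"
    by (rule gcd_form_dvd_modulus)+
  have "gcd (int m\<^sub>1) v dvd u * int m\<^sub>1 + v * int m\<^sub>2" "gcd (int m\<^sub>2) u dvd u * int m\<^sub>1 + v * int m\<^sub>2"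
    by simp_all
  then have "is_unit (gcd (int m\<^sub>1) v)" "is_unit (gcd (int m\<^sub>2) u)"
    unfolding assms(2) by simp_all
  then have "coprime (int m\<^sub>1) v" "coprime (int m\<^sub>2) u"
    by (simp_all only: is_unit_gcd)
  show ?thesis
  proof (rule gcd_form_greatest)
    show "?g\<^sub>1 * ?g\<^sub>2 dvd int (m\<^sub>1 * m\<^sub>2)"
      using g\<^sub>1 g\<^sub>2 by (simp add: mult_dvd_mono)
  next
    fix i j
    have "?g\<^sub>1 dvd v * a$i$j" "?g\<^sub>2 dvd u * a$i$j"
      using gcd_form_dvd_coeff[of "scale_form v a" m\<^sub>1 i j] gcd_form_dvd_coeff[of "scale_form u a" m\<^sub>2 i j]
      unfolding scale_form_def by simp_all
    then have "?g\<^sub>1 dvd a$i$j" "?g\<^sub>2 dvd a$i$j"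
      using coprime_divisors[OF g\<^sub>1 dvd_refl] coprime_divisors[OF g\<^sub>2 dvd_refl]
        \<open>coprime (int m\<^sub>1) v\<close> \<open>coprime (int m\<^sub>2) u\<close> coprime_dvd_mult_right_iff by blast+
    moreover have "coprime ?g\<^sub>1 ?g\<^sub>2"
      using coprime_divisors[OF g\<^sub>1 g\<^sub>2] assms(1) by simp
    ultimately show "?g\<^sub>1 * ?g\<^sub>2 dvd a$i$j"
      by (simp add: divides_mult)
  qed
qed

lemma norm_S_sum_bound_mult_coprime:
  fixes a :: "int^'n^'n" and e :: nat
  assumes "coprime m\<^sub>1 m\<^sub>2" "m\<^sub>1 > 0" "m\<^sub>2 > 0"
    and bound\<^sub>1: "\<And>b :: int^'n^'n. cmod (S_sum m\<^sub>1 b) \<le> real m\<^sub>1 ^ e * real_of_int (gcd_form b m\<^sub>1) ^ CARD('n)"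
    and bound\<^sub>2: "\<And>b :: int^'n^'n. cmod (S_sum m\<^sub>2 b) \<le> real m\<^sub>2 ^ e * real_of_int (gcd_form b m\<^sub>2) ^ CARD('n)"
  shows "cmod (S_sum (m\<^sub>1 * m\<^sub>2) a) \<le> real (m\<^sub>1 * m\<^sub>2) ^ e * real_of_int (gcd_form a (m\<^sub>1 * m\<^sub>2)) ^ CARD('n)"
proof -
  obtain u v where uv: "u * int m\<^sub>1 + v * int m\<^sub>2 = 1"
    using bezout_int[of "int m\<^sub>1" "int m\<^sub>2"] assms(1) by auto
  let ?g\<^sub>1 = "gcd_form (scale_form v a) m\<^sub>1" and ?g\<^sub>2 = "gcd_form (scale_form u a) m\<^sub>2"
  have "?g\<^sub>1 * ?g\<^sub>2 \<le> gcd_form a (m\<^sub>1 * m\<^sub>2)"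
    using gcd_form_scale_form_mult_dvd[OF assms(1) uv, of a] gcd_form_pos[of "m\<^sub>1 * m\<^sub>2" a] assms(2,3)
    by (intro zdvd_imp_le) simp_all
  then have g: "real_of_int ?g\<^sub>1 * real_of_int ?g\<^sub>2 \<le> real_of_int (gcd_form a (m\<^sub>1 * m\<^sub>2))"
    by (simp flip: of_int_mult)
  have "cmod (S_sum (m\<^sub>1 * m\<^sub>2) a) = cmod (S_sum m\<^sub>1 (scale_form v a)) * cmod (S_sum m\<^sub>2 (scale_form u a))"
    by (simp add: S_sum_mult_coprime[OF assms(1-3) uv] norm_mult)
  also have "\<dots> \<le> (real m\<^sub>1 ^ e * real_of_int ?g\<^sub>1 ^ CARD('n)) * (real m\<^sub>2 ^ e * real_of_int ?g\<^sub>2 ^ CARD('n))"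
    using bound\<^sub>1 bound\<^sub>2 gcd_form_pos[OF assms(2), of "scale_form v a"] by (intro mult_mono) simp_all
  also have "\<dots> = real (m\<^sub>1 * m\<^sub>2) ^ e * (real_of_int ?g\<^sub>1 * real_of_int ?g\<^sub>2) ^ CARD('n)"
    by (simp add: power_mult_distrib)
  also have "\<dots> \<le> real (m\<^sub>1 * m\<^sub>2) ^ e * real_of_int (gcd_form a (m\<^sub>1 * m\<^sub>2)) ^ CARD('n)"
    using g gcd_form_pos[OF assms(2), of "scale_form v a"] gcd_form_pos[OF assms(3), of "scale_form u a"]
    by (intro mult_left_mono power_mono) simp_all
  finally show ?thesis .
qed

lemma coprime_if_squarefree_prime_mult:
  assumes "squarefree (p * m)" "prime (p :: nat)"
  shows "coprime p m"
proof (rule prime_imp_coprime[OF assms(2)], rule notI)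
  assume "p dvd m"
  then have "p ^ 2 dvd p * m"
    unfolding power2_eq_square by (rule mult_dvd_mono[OF dvd_refl])
  from squarefreeD[OF assms(1) this] assms(2) show False
    by auto
qed

lemma norm_S_sum_squarefree:
  fixes a :: "int^'n^'n"
  assumes "squarefree d" "d > 0"
  shows "cmod (S_sum d a) \<le> real d ^ (CARD('n) * CARD('n) - CARD('n)) * real_of_int (gcd_form a d) ^ CARD('n)"
  using assms
proof (induction d arbitrary: a rule: less_induct)
  case (less d)
  show ?case
  proof (cases "d = 1")
    case True
    have "1 \<le> real_of_int (gcd_form a 1) ^ CARD('n)"
      using gcd_form_pos[of 1 a] by simp
    then show ?thesis
      using norm_S_sum_le[of 1 a] True by simp
  next
    case False
    then obtain p where p: "prime p" "p dvd d"
      using prime_factor_nat by blast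
    then obtain m where d: "d = p * m"
      by blast
    have m: "m > 0" "m < d"
      using d less.prems(2) prime_gt_1_nat[OF p(1)] by auto
    have "coprime p m"
      using coprime_if_squarefree_prime_mult less.prems(1) p(1) d by blast
    moreover have "squarefree m"
      using squarefree_multD(2) less.prems(1) d by blast
    then have "cmod (S_sum m b) \<le> real m ^ (CARD('n) * CARD('n) - CARD('n)) * real_of_int (gcd_form b m) ^ CARD('n)"
      for b :: "int^'n^'n"
      using less.IH[OF m(2)] m(1) by blast
    ultimately show ?thesis
      unfolding d using m(1) p(1) prime_gt_0_nat
      by (intro norm_S_sum_bound_mult_coprime norm_S_sum_prime[OF p(1)]) blast+
  qed
qed

lemma power_le_powr_of_le_one:
  fixes x :: real
  assumes "0 < x" "x \<le> 1" "r \<le> real n"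
  shows "x ^ n \<le> x powr r"
  using powr_mono'[OF assms(3) _ assms(2)] assms(1) by (simp add: powr_realpow)

theorem lemma3p7:
  shows "\<exists>f :: nat \<Rightarrow> real. (f \<longlonglongrightarrow> 0) \<and>
    (\<forall>(d::nat) (a :: int^'n^'n). d \<ge> 1 \<longrightarrow> squarefree d \<longrightarrow>
       cmod (S_sum d a) \<le> real d powr (real (CARD('n))^2 + f d) *
         (if is_monomial a
          then (real_of_int (gcd_form a d) / real d) ^ CARD('n)
          else (real_of_int (gcd_form a d) / real d) powr ((real (CARD('n)) + 1) / 2)))"
proof (intro exI[of _ "\<lambda>_. 0"] conjI allI impI)
  fix d :: nat and a :: "int^'n^'n"
  assume d: "d \<ge> 1" and sf: "squarefree d"
  let ?n = "CARD('n)" and ?g = "real_of_int (gcd_form a d)"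
  have "0 < ?g" "?g \<le> real d"
    using d gcd_form_pos[of d a] zdvd_imp_le[OF gcd_form_dvd_modulus[of a d]] by simp_all
  then have x: "0 < ?g / real d" "?g / real d \<le> 1"
    by simp_all
  have "cmod (S_sum d a) \<le> real d ^ (?n * ?n - ?n) * ?g ^ ?n"
    using sf d by (intro norm_S_sum_squarefree) simp_all
  also have "\<dots> = real d powr (real ?n ^ 2 + 0) * (?g / real d) ^ ?n"
  proof -
    have "real d powr (real ?n ^ 2 + 0) = real d ^ (?n * ?n - ?n) * real d ^ ?n"
      using powr_realpow[of "real d" "?n * ?n"] d by (simp add: power2_eq_square flip: power_add)
    then show ?thesis
      using d by (simp add: power_divide)
  qed
  also have "\<dots> \<le> real d powr (real ?n ^ 2 + 0) *
      (if is_monomial a then (?g / real d) ^ ?n else (?g / real d) powr ((real ?n + 1) / 2))"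
    using x power_le_powr_of_le_one[OF x, of "(real ?n + 1) / 2" ?n] by (simp add: mult_left_mono)
  finally show "cmod (S_sum d a) \<le> real d powr (real ?n ^ 2 + 0) *
      (if is_monomial a then (?g / real d) ^ ?n else (?g / real d) powr ((real ?n + 1) / 2))" .
qed simp

end
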